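(* Let $A$ be an arrangement of hyperplanes in general position in $\mathbb{R}^d$ and let $q\in\mathbb{R}^d$. Then (1) $\mathrm{RD}(A,q)=\mathrm{TD}(A^*_q,q)$; (2) $\mathrm{HTvD}(A,q)=\mathrm{TvD}(A^*_q,q)$; (3) $\mathrm{HED}(A,q)=\mathrm{ED}(A^*_q,q)$.
   Context: A hyperplane arrangement is a finite set of affine hyperplanes in $\mathbb{R}^d$. Regression depth $\mathrm{RD}(A,q)$: the minimum, over all closed rays emanating from $q$, of the number of hyperplanes of $A$ intersected by or parallel to the ray (a hyperplane containing $q$ is intersected by every ray from $q$). Hyperplane Tverberg depth $\mathrm{HTvD}(A,q)$: the maximum $r$ such that $A$ can be partitioned into $r$ parts with $q$ having regression depth $\ge 1$ with respect to each part. An arrangement $A$ $k$-encloses $q$ if $A$ can be partitioned into $d+1$ pairwise disjoint subsets $A_1,\dots,A_{d+1}$, each of size $k$, such that for every choice $h_1\in A_1,\dots,h_{d+1}\in A_{d+1}$ we have $\mathrm{RD}(\{h_1,\dots,h_{d+1}\},q)\ge 1$; the hyperplane enclosing depth $\mathrm{HED}(A,q)$ is the maximum $k$ such that some sub-arrangement of $A$ $k$-encloses $q$. Duality: for $h\in A$, let $p(h)$ be the point of $h$ closest to $q$; $A^*_q$ is the multiset $\{p(h): h\in A\}$ (hyperplanes through $q$ give copies of $q$). For a finite (multi)set $S$ of points and a point $q$: the Tukey depth $\mathrm{TD}(S,q)$ is the minimum number of points of $S$ in a closed half-space containing $q$; the Tverberg depth $\mathrm{TvD}(S,q)$ is the maximum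 $r$ such that $S$ can be partitioned into $r$ parts whose convex hulls all contain $q$; a point set $S'$ $k$-encloses $q$ if it can be partitioned into $d+1$ disjoint parts of size $k$ such that $q$ lies in the convex hull of every choice of one point from each part, and the enclosing depth $\mathrm{ED}(S,q)$ is the maximum $k$ such that some subset of $S$ $k$-encloses $q$. *)

theory Defs
  imports "HOL-Analysis.Analysis" "HOL-Library.Multiset" "HOL-Library.Disjoint_Sets"
begin

definition is_hyperplane :: "'a::euclidean_space set \<Rightarrow> bool" where
  "is_hyperplane h \<longleftrightarrow> (\<exists>a b. a \<noteq> 0 \<and> h = {x. a \<bullet> x = b})"

definition arrangement :: "'a::euclidean_space set set \<Rightarrow> bool" where
  "arrangement A \<longleftrightarrow> finite A \<and> (\<forall>h\<in>A. is_hyperplane h)"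

definition general_position :: "'a::euclidean_space set set \<Rightarrow> bool" where
  "general_position A \<longleftrightarrow>
     (\<forall>S\<subseteq>A. card S \<le> DIM('a) \<longrightarrow> aff_dim (\<Inter>S) = int DIM('a) - int (card S)) \<and>
     (\<forall>S\<subseteq>A. card S = DIM('a) + 1 \<longrightarrow> \<Inter>S = {})"

(* The closed ray from q in direction v (v \<noteq> 0) meets h, or is parallel to h. *)
definition ray_hits :: "'a::euclidean_space \<Rightarrow> 'a \<Rightarrow> 'a set \<Rightarrow> bool" where
  "ray_hits q v h \<longleftrightarrow> (\<exists>t::real. t \<ge> 0 \<and> q + t *\<^sub>R v \<in> h) \<or> (\<forall>x\<in>h. x + v \<in> h)"

definition RD :: "'a::euclidean_space set set \<Rightarrow> 'a \<Rightarrow> nat" where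
  "RD A q = Min ((\<lambda>v. card {h\<in>A. ray_hits q v h}) ` {v. v \<noteq> 0})"

definition HTvD :: "'a::euclidean_space set set \<Rightarrow> 'a \<Rightarrow> nat" where
  "HTvD A q = Max (insert 0 {r. \<exists>P. partition_on A P \<and> card P = r \<and> (\<forall>B\<in>P. RD B q \<ge> 1)})"

definition hyp_encloses :: "'a::euclidean_space set set \<Rightarrow> nat \<Rightarrow> 'a \<Rightarrow> bool" where
  "hyp_encloses A k q \<longleftrightarrow> (\<exists>F :: nat \<Rightarrow> 'a set set.
      (\<Union>i\<le>DIM('a). F i) = A \<and>
      (\<forall>i\<le>DIM('a). \<forall>j\<le>DIM('a). i \<noteq> j \<longrightarrow> F i \<inter> F j = {}) \<and>
      (\<forall>i\<le>DIM('a). card (F i) = k) \<and>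
      (\<forall>h :: nat \<Rightarrow> 'a set. (\<forall>i\<le>DIM('a). h i \<in> F i) \<longrightarrow> RD (h ` {..DIM('a)}) q \<ge> 1))"

definition HED :: "'a::euclidean_space set set \<Rightarrow> 'a \<Rightarrow> nat" where
  "HED A q = Max {k. \<exists>A'\<subseteq>A. hyp_encloses A' k q}"

(* Duality: A^*_q, the multiset of closest points to q. *)
definition dual_arr :: "'a::euclidean_space set set \<Rightarrow> 'a \<Rightarrow> 'a multiset" where
  "dual_arr A q = image_mset (\<lambda>h. closest_point h q) (mset_set A)"

definition TD :: "'a::euclidean_space multiset \<Rightarrow> 'a \<Rightarrow> nat" where
  "TD S q = Min ((\<lambda>(a, b). size (filter_mset (\<lambda>x. a \<bullet> x \<le> b) S)) `
                 {(a, b). a \<noteq> 0 \<and> a \<bullet> q \<le> b})"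

definition TvD :: "'a::euclidean_space multiset \<Rightarrow> 'a \<Rightarrow> nat" where
  "TvD S q = Max (insert 0 {r. \<exists>P :: 'a multiset multiset.
      sum_mset P = S \<and> size P = r \<and> (\<forall>B\<in>#P. q \<in> convex hull (set_mset B))})"

definition pt_encloses :: "'a::euclidean_space multiset \<Rightarrow> nat \<Rightarrow> 'a \<Rightarrow> bool" where
  "pt_encloses S k q \<longleftrightarrow> (\<exists>F :: nat \<Rightarrow> 'a multiset.
      (\<Sum>i\<le>DIM('a). F i) = S \<and>
      (\<forall>i\<le>DIM('a). size (F i) = k) \<and>
      (\<forall>p :: nat \<Rightarrow> 'a. (\<forall>i\<le>DIM('a). p i \<in># F i) \<longrightarrow> q \<in> convex hull (p ` {..DIM('a)})))"

definition ED :: "'a::euclidean_space multiset \<Rightarrow> 'a \<Rightarrow> nat" where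
  "ED S q = Max {k. \<exists>S'. S' \<subseteq># S \<and> pt_encloses S' k q}"

end

theory Submission
  imports Defs
begin

text \<open>
  Let \<open>p(h)\<close> be the point of \<open>h\<close> closest to \<open>q\<close>. Since \<open>p(h) - q\<close> is normal to \<open>h\<close>,
  the ray from \<open>q\<close> in direction \<open>v\<close> meets or is parallel to \<open>h\<close> exactly when
  \<open>v \<bullet> (p(h) - q) \<ge> 0\<close>, i.e. when \<open>p(h)\<close> lies in the closed halfspace through \<open>q\<close> with
  inner normal \<open>v\<close> (a hyperplane through \<open>q\<close> has \<open>p(h) = q\<close> and is always counted).
  So regression depth is the Tukey depth of \<open>A\<^sup>*\<^sub>q\<close> computed over halfspaces bounded
  through \<open>q\<close>, and these already attain the minimum. In particular \<open>RD(B, q) \<ge> 1\<close> iff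
  \<open>q\<close> lies in the convex hull of \<open>p(B)\<close>, so Tverberg and enclosing depths agree once
  partitions of \<open>A\<close> are matched with decompositions of the multiset \<open>A\<^sup>*\<^sub>q\<close>.
\<close>

lemma arrangement_subset: "arrangement A \<Longrightarrow> B \<subseteq> A \<Longrightarrow> arrangement B"
  unfolding arrangement_def by (auto dest: finite_subset)

lemma closest_point_hyperplane:
  fixes a q :: "'a::euclidean_space"
  assumes "a \<noteq> 0"
  shows "closest_point {x. a \<bullet> x = b} q = q + ((b - a \<bullet> q) / (a \<bullet> a)) *\<^sub>R a"
proof -
  define c where "c = (b - a \<bullet> q) / (a \<bullet> a)"
  let ?x = "q + c *\<^sub>R a"
  have "a \<bullet> a > 0" using assms by simp
  then have x: "a \<bullet> ?x = b" by (simp add: c_def inner_add_right field_simps)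
  have "dist q ?x \<le> dist q z" if "a \<bullet> z = b" for z
  proof -
    have "a \<bullet> (z - ?x) = 0" using that x by (simp only: inner_diff_right diff_self)
    then have "(z - ?x) \<bullet> (?x - q) = 0" by (simp add: inner_commute)
    then have "(norm (z - q))\<^sup>2 = (norm (z - ?x))\<^sup>2 + (norm (?x - q))\<^sup>2"
      using norm_add_Pythagorean[of "z - ?x" "?x - q"] by (simp add: orthogonal_def)
    then have "norm (?x - q) \<le> norm (z - q)"
      by (metis le_add_same_cancel2 power2_le_imp_le norm_ge_zero zero_le_power2)
    then show ?thesis by (simp add: dist_norm norm_minus_commute)
  qed
  then show ?thesis
    using x unfolding c_def[symmetric]
    by (intro closest_point_unique[symmetric] convex_hyperplane closed_hyperplane) auto
qed

lemma ray_hits_iff_closest_point: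
  assumes "is_hyperplane h"
  shows "ray_hits q v h \<longleftrightarrow> 0 \<le> v \<bullet> (closest_point h q - q)"
proof -
  obtain a b where "a \<noteq> 0" and h: "h = {x. a \<bullet> x = b}"
    using assms unfolding is_hyperplane_def by blast
  define c where "c = (b - a \<bullet> q) / (a \<bullet> a)"
  have aa: "a \<bullet> a > 0" using \<open>a \<noteq> 0\<close> by simp
  have foot: "q + c *\<^sub>R a \<in> h" using aa by (simp add: h c_def inner_add_right field_simps)
  have parallel: "(\<forall>x\<in>h. x + v \<in> h) \<longleftrightarrow> a \<bullet> v = 0"
  proof
    assume "\<forall>x\<in>h. x + v \<in> h"
    then have "q + c *\<^sub>R a + v \<in> h" using foot by blast
    with foot show "a \<bullet> v = 0" by (simp add: h inner_add_right)
  qed (simp add: h inner_add_right)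
  have meets: "(\<exists>t::real. t \<ge> 0 \<and> q + t *\<^sub>R v \<in> h) \<longleftrightarrow>
               (\<exists>t::real. t \<ge> 0 \<and> t * (a \<bullet> v) = b - a \<bullet> q)"
    by (auto simp: h inner_add_right algebra_simps)
  have "v \<bullet> (closest_point h q - q) = (b - a \<bullet> q) * (a \<bullet> v) / (a \<bullet> a)"
    using closest_point_hyperplane[OF \<open>a \<noteq> 0\<close>] by (simp add: h inner_commute)
  then have sign: "0 \<le> v \<bullet> (closest_point h q - q) \<longleftrightarrow> 0 \<le> (b - a \<bullet> q) * (a \<bullet> v)"
    using aa by (simp add: zero_le_divide_iff del: inner_gt_zero_iff)
  have ray: "(\<exists>t::real. t \<ge> 0 \<and> t * s = d) \<longleftrightarrow> 0 \<le> d * s" if "s \<noteq> 0" for s d :: real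
  proof
    assume "\<exists>t::real. t \<ge> 0 \<and> t * s = d"
    then show "0 \<le> d * s" by (metis mult.assoc mult_nonneg_nonneg zero_le_square)
  next
    assume "0 \<le> d * s"
    then have "d / s \<ge> 0" by (simp add: zero_le_divide_iff zero_le_mult_iff)
    then show "\<exists>t::real. t \<ge> 0 \<and> t * s = d" using that by (intro exI[of _ "d / s"]) simp
  qed
  show ?thesis
    unfolding ray_hits_def parallel meets sign using ray[of "a \<bullet> v" "b - a \<bullet> q"]
    by (cases "a \<bullet> v = 0") auto
qed

lemma ex_nonzero_vector: "\<exists>v::'a::euclidean_space. v \<noteq> 0"
  using nonzero_Basis SOME_Basis by blast

lemma in_convex_hull_iff_halfspaces:
  fixes S :: "'a::euclidean_space set"
  assumes "finite S"
  shows "q \<in> convex hull S \<longleftrightarrow> (\<forall>v. v \<noteq> 0 \<longrightarrow> (\<exists>x\<in>S. 0 \<le> v \<bullet> (x - q)))"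
proof
  assume q: "q \<in> convex hull S"
  show "\<forall>v. v \<noteq> 0 \<longrightarrow> (\<exists>x\<in>S. 0 \<le> v \<bullet> (x - q))"
  proof (intro allI impI, rule ccontr)
    fix v :: 'a
    assume "\<not> (\<exists>x\<in>S. 0 \<le> v \<bullet> (x - q))"
    then have "S \<subseteq> {x. v \<bullet> x < v \<bullet> q}" by (auto simp: inner_diff_right)
    then have "convex hull S \<subseteq> {x. v \<bullet> x < v \<bullet> q}"
      by (intro hull_minimal convex_halfspace_lt)
    with q show False by auto
  qed
next
  assume meets: "\<forall>v. v \<noteq> 0 \<longrightarrow> (\<exists>x\<in>S. 0 \<le> v \<bullet> (x - q))"
  show "q \<in> convex hull S"
  proof (rule ccontr)
    assume "q \<notin> convex hull S"
    moreover have "closed (convex hull S)"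
      using assms by (simp add: compact_imp_closed finite_imp_compact_convex_hull)
    ultimately obtain a b where ab: "a \<bullet> q < b" "\<forall>x\<in>convex hull S. b < a \<bullet> x"
      using separating_hyperplane_closed_point[OF convex_convex_hull] by blast
    then have "\<forall>x\<in>S. b < a \<bullet> x" using hull_subset[of S convex] by blast
    then have "a \<noteq> 0 \<or> S = {}" using ab(1) by (cases "a = 0") auto
    then obtain v where "v \<noteq> 0" "\<forall>x\<in>S. v \<bullet> (x - q) < 0"
    proof
      assume "a \<noteq> 0"
      with \<open>\<forall>x\<in>S. b < a \<bullet> x\<close> ab(1) show thesis
        by (intro that[of "- a"]) (auto simp: inner_diff_right)
    next
      assume "S = {}"
      obtain v :: 'a where "v \<noteq> 0" using ex_nonzero_vector by blast
      with \<open>S = {}\<close> show thesis by (intro that[of v]) auto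
    qed
    with meets show False by (metis not_le)
  qed
qed

definition points_in_halfspace :: "'a::euclidean_space multiset \<Rightarrow> 'a \<Rightarrow> 'a \<Rightarrow> nat" where
  "points_in_halfspace S q v = size (filter_mset (\<lambda>x. 0 \<le> v \<bullet> (x - q)) S)"

lemma finite_points_in_halfspace_image: "finite (points_in_halfspace S q ` V)"
proof (rule finite_subset)
  show "points_in_halfspace S q ` V \<subseteq> {..size S}"
    by (auto simp: points_in_halfspace_def intro: size_filter_mset_lesseq)
qed simp

lemma TD_eq_Min_points_in_halfspace:
  fixes S :: "'a::euclidean_space multiset"
  shows "TD S q = Min (points_in_halfspace S q ` {v. v \<noteq> 0})"
proof -
  define T where "T = (\<lambda>(a, b). size (filter_mset (\<lambda>x. a \<bullet> x \<le> b) S)) `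
                        {(a, b). a \<noteq> 0 \<and> a \<bullet> q \<le> b}"
  let ?Y = "points_in_halfspace S q ` {v. v \<noteq> 0}"
  have "finite T"
    by (rule finite_subset[of _ "{..size S}"]) (auto simp: T_def intro: size_filter_mset_lesseq)
  have "?Y \<noteq> {}" using ex_nonzero_vector by auto
  have "?Y \<subseteq> T"
  proof
    fix n assume "n \<in> ?Y"
    then obtain v where "v \<noteq> 0" "n = points_in_halfspace S q v" by blast
    then show "n \<in> T"
      unfolding T_def points_in_halfspace_def
      by (intro image_eqI[of _ _ "(- v, - v \<bullet> q)"]) (auto simp: inner_diff_right)
  qed
  then have "Min T \<le> Min ?Y"
    using \<open>?Y \<noteq> {}\<close> \<open>finite T\<close> by (rule Min_antimono)
  moreover have "Min ?Y \<le> Min T"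
  proof -
    have "Min T \<in> T" using \<open>finite T\<close> \<open>?Y \<subseteq> T\<close> \<open>?Y \<noteq> {}\<close> by (intro Min_in) auto
    then obtain a b where "a \<noteq> 0" "a \<bullet> q \<le> b"
      and min: "Min T = size (filter_mset (\<lambda>x. a \<bullet> x \<le> b) S)"
      unfolding T_def by (elim imageE) auto
    have "points_in_halfspace S q (- a) \<le> Min T"
      unfolding min points_in_halfspace_def using \<open>a \<bullet> q \<le> b\<close>
      by (intro size_mset_mono filter_mset_mono_strong) (auto simp: inner_diff_right)
    moreover have "Min ?Y \<le> points_in_halfspace S q (- a)"
      using \<open>a \<noteq> 0\<close> by (intro Min_le finite_points_in_halfspace_image) auto
    ultimately show ?thesis by linarith
  qed
  ultimately show ?thesis by (simp add: TD_def T_def)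
qed

lemma RD_eq_Min_points_in_halfspace:
  assumes "arrangement A"
  shows "RD A q = Min (points_in_halfspace (dual_arr A q) q ` {v. v \<noteq> 0})"
proof -
  have "card {h\<in>A. ray_hits q v h} = points_in_halfspace (dual_arr A q) q v" for v
  proof -
    have "{h\<in>A. ray_hits q v h} = {h\<in>A. 0 \<le> v \<bullet> (closest_point h q - q)}"
      using assms ray_hits_iff_closest_point by (auto simp: arrangement_def)
    then show ?thesis
      using assms by (simp add: points_in_halfspace_def dual_arr_def filter_mset_image_mset arrangement_def)
  qed
  then show ?thesis by (simp add: RD_def)
qed

lemma RD_eq_TD:
  assumes "arrangement A"
  shows "RD A q = TD (dual_arr A q) q"
  using assms by (simp add: RD_eq_Min_points_in_halfspace TD_eq_Min_points_in_halfspace)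

lemma one_le_RD_iff_in_convex_hull:
  assumes "arrangement B"
  shows "1 \<le> RD B q \<longleftrightarrow> q \<in> convex hull (set_mset (dual_arr B q))"
proof -
  have "{v. v \<noteq> 0} \<noteq> ({} :: 'a set)" using ex_nonzero_vector by auto
  then have "1 \<le> RD B q \<longleftrightarrow> (\<forall>v. v \<noteq> 0 \<longrightarrow> 1 \<le> points_in_halfspace (dual_arr B q) q v)"
    using assms by (simp add: RD_eq_Min_points_in_halfspace finite_points_in_halfspace_image)
  also have "\<dots> \<longleftrightarrow> (\<forall>v. v \<noteq> 0 \<longrightarrow> (\<exists>x\<in>#dual_arr B q. 0 \<le> v \<bullet> (x - q)))"
    by (auto simp: points_in_halfspace_def Suc_le_eq nonempty_has_size[symmetric])
  also have "\<dots> \<longleftrightarrow> q \<in> convex hull (set_mset (dual_arr B q))"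
    by (simp add: in_convex_hull_iff_halfspaces)
  finally show ?thesis .
qed

lemma set_mset_dual_arr: "finite B \<Longrightarrow> set_mset (dual_arr B q) = (\<lambda>h. closest_point h q) ` B"
  by (simp add: dual_arr_def)

lemma one_le_RD_image_iff:
  assumes "arrangement A" "h ` I \<subseteq> A"
  shows "1 \<le> RD (h ` I) q \<longleftrightarrow> q \<in> convex hull ((\<lambda>i. closest_point (h i) q) ` I)"
proof -
  have "arrangement (h ` I)" using assms by (rule arrangement_subset)
  then have "finite (h ` I)" by (simp add: arrangement_def)
  then have "set_mset (dual_arr (h ` I) q) = (\<lambda>i. closest_point (h i) q) ` I"
    by (simp add: set_mset_dual_arr image_comp)
  with one_le_RD_iff_in_convex_hull[OF \<open>arrangement (h ` I)\<close>] show ?thesis by simp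
qed

lemma mset_set_set_mset_eq:
  assumes "\<And>x. count M x \<le> 1"
  shows "mset_set (set_mset M) = M"
proof (rule multiset_eqI)
  fix x
  show "count (mset_set (set_mset M)) x = count M x"
  proof (cases "x \<in># M")
    case True
    then have "0 < count M x" by simp
    with assms[of x] have "count M x = 1" by linarith
    with True show ?thesis by (simp add: count_mset_set)
  qed (simp add: count_mset_set not_in_iff)
qed

lemma mset_set_eq_plusE:
  assumes "finite A" "mset_set A = M + N"
  obtains A1 A2 where "A = A1 \<union> A2" "A1 \<inter> A2 = {}" "M = mset_set A1" "N = mset_set A2"
proof
  have count: "count M x + count N x = count (mset_set A) x" for x
    by (simp add: assms(2))
  then have le: "count M x + count N x \<le> 1" for x
    by (simp add: count_mset_set')
  show "A = set_mset M \<union> set_mset N"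
  proof (rule set_eqI)
    fix x
    show "x \<in> A \<longleftrightarrow> x \<in> set_mset M \<union> set_mset N"
      using count[of x] assms(1)
      by (auto simp: count_mset_set' simp flip: count_greater_zero_iff split: if_split_asm)
  qed
  have "\<not> (x \<in># M \<and> x \<in># N)" for x
    using le[of x] by (auto simp flip: count_greater_zero_iff)
  then show "set_mset M \<inter> set_mset N = {}" by blast
  show "M = mset_set (set_mset M)"
    by (rule mset_set_set_mset_eq[symmetric]) (rule add_leD1[OF le])
  show "N = mset_set (set_mset N)"
    by (rule mset_set_set_mset_eq[symmetric]) (rule add_leD2[OF le])
qed

lemma image_mset_mset_set_eq_plusE:
  assumes "finite A" "image_mset f (mset_set A) = M + N"
  obtains A1 A2 where "A = A1 \<union> A2" "A1 \<inter> A2 = {}"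
    "M = image_mset f (mset_set A1)" "N = image_mset f (mset_set A2)"
proof -
  obtain M' N' where MN: "mset_set A = M' + N'" "M = image_mset f M'" "N = image_mset f N'"
    using image_mset_eq_plusD[OF assms(2)] by blast
  obtain A1 A2 where "A = A1 \<union> A2" "A1 \<inter> A2 = {}" "M' = mset_set A1" "N' = mset_set A2"
    using assms(1) MN(1) by (rule mset_set_eq_plusE)
  with MN(2,3) show thesis by (intro that) simp_all
qed

lemma subseteq_image_mset_mset_setE:
  assumes "finite A" "M \<subseteq># image_mset f (mset_set A)"
  obtains A' where "A' \<subseteq> A" "M = image_mset f (mset_set A')"
proof -
  obtain N where "image_mset f (mset_set A) = M + N"
    using assms(2) by (auto simp: mset_subset_eq_exists_conv)
  with assms(1) obtain A1 A2 where "A = A1 \<union> A2" "M = image_mset f (mset_set A1)"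
    by (elim image_mset_mset_set_eq_plusE) blast
  then show thesis by (intro that[of A1]) auto
qed

lemma sum_image_mset_mset_set_disjoint_family:
  assumes "finite I" "\<forall>i\<in>I. finite (F i)" "\<forall>i\<in>I. \<forall>j\<in>I. i \<noteq> j \<longrightarrow> F i \<inter> F j = {}"
  shows "(\<Sum>i\<in>I. image_mset f (mset_set (F i))) = image_mset f (mset_set (\<Union>i\<in>I. F i))"
  using assms
proof (induction I rule: finite_induct)
  case (insert i I)
  have IH: "(\<Sum>j\<in>I. image_mset f (mset_set (F j))) = image_mset f (mset_set (\<Union>j\<in>I. F j))"
    using insert.prems by (intro insert.IH) auto
  have "\<forall>j\<in>I. F i \<inter> F j = {}" using insert.prems(2) insert.hyps(2) by fastforce
  then have "F i \<inter> (\<Union>j\<in>I. F j) = {}" by blast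
  moreover have "finite (F i)" "finite (\<Union>j\<in>I. F j)" using insert.hyps(1) insert.prems(1) by auto
  ultimately show ?case using insert.hyps IH by (simp add: mset_set_Union)
qed simp

lemma ex_disjoint_family_if_sum_eq_image_mset_mset_set:
  assumes "finite I" "finite A" "(\<Sum>i\<in>I. G i) = image_mset f (mset_set A)"
  shows "\<exists>F. (\<Union>i\<in>I. F i) = A \<and> (\<forall>i\<in>I. \<forall>j\<in>I. i \<noteq> j \<longrightarrow> F i \<inter> F j = {}) \<and>
             (\<forall>i\<in>I. G i = image_mset f (mset_set (F i)))"
  using assms
proof (induction I arbitrary: A rule: finite_induct)
  case empty
  then show ?case by (simp add: mset_set_empty_iff)
next
  case (insert i I)
  have "image_mset f (mset_set A) = G i + (\<Sum>j\<in>I. G j)"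
    using insert.hyps insert.prems(2) by simp
  with insert.prems(1) obtain A1 A2 where A: "A = A1 \<union> A2" "A1 \<inter> A2 = {}"
    "G i = image_mset f (mset_set A1)" "(\<Sum>j\<in>I. G j) = image_mset f (mset_set A2)"
    by (rule image_mset_mset_set_eq_plusE)
  have "finite A2" using A(1) insert.prems(1) by simp
  then obtain F where F: "(\<Union>j\<in>I. F j) = A2" "\<forall>j\<in>I. \<forall>k\<in>I. j \<noteq> k \<longrightarrow> F j \<inter> F k = {}"
    "\<forall>j\<in>I. G j = image_mset f (mset_set (F j))"
    using insert.IH[OF \<open>finite A2\<close> A(4)] by blast
  define F' where "F' = F(i := A1)"
  have F'_i: "F' i = A1" by (simp add: F'_def)
  have F'_I: "\<forall>j\<in>I. F' j = F j" using insert.hyps(2) by (auto simp: F'_def)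
  have F_A2: "\<forall>j\<in>I. F j \<subseteq> A2" using F(1) by blast
  show ?case
  proof (intro exI[of _ F'] conjI)
    have "(\<Union>j\<in>I. F' j) = A2" using F'_I F(1) by auto
    then show "(\<Union>j\<in>insert i I. F' j) = A" using F'_i A(1) by simp
    show "\<forall>j\<in>insert i I. \<forall>k\<in>insert i I. j \<noteq> k \<longrightarrow> F' j \<inter> F' k = {}"
      using F(2) F'_i F'_I F_A2 A(2) by (metis Int_commute disjoint_iff insert_iff subsetD)
    show "\<forall>j\<in>insert i I. G j = image_mset f (mset_set (F' j))"
      using F(3) F'_I A(3) by (simp add: F'_def)
  qed
qed

lemma sum_mset_image_mset_mset_set_partition:
  assumes "finite A" "partition_on A P"
  shows "sum_mset (image_mset (\<lambda>B. image_mset f (mset_set B)) (mset_set P)) = image_mset f (mset_set A)"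
proof -
  have "finite P" using assms by (rule finite_elements)
  moreover have "\<forall>B\<in>P. finite B"
    using assms(1) partition_onD1[OF assms(2)] by (metis Union_upper finite_subset)
  moreover have "\<forall>B\<in>P. \<forall>C\<in>P. B \<noteq> C \<longrightarrow> B \<inter> C = {}"
    using assms(2) by (auto simp: partition_on_def disjoint_def)
  ultimately have "(\<Sum>B\<in>P. image_mset f (mset_set B)) = image_mset f (mset_set (\<Union>P))"
    using sum_image_mset_mset_set_disjoint_family[of P id] by simp
  then show ?thesis using assms(2) by (simp add: sum_unfold_sum_mset partition_on_def)
qed

lemma ex_partition_if_sum_mset_eq_image_mset_mset_set:
  assumes "finite A" "sum_mset Q = image_mset f (mset_set A)" "{#} \<notin># Q"
  shows "\<exists>P. partition_on A P \<and> Q = image_mset (\<lambda>B. image_mset f (mset_set B)) (mset_set P)"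
  using assms
proof (induction Q arbitrary: A)
  case empty
  then have "A = {}" by (simp add: mset_set_empty_iff)
  then show ?case by (simp add: partition_on_empty)
next
  case (add B Q)
  have "image_mset f (mset_set A) = B + sum_mset Q" using add.prems(2) by simp
  with add.prems(1) obtain A1 A2 where A: "A = A1 \<union> A2" "A1 \<inter> A2 = {}"
    "B = image_mset f (mset_set A1)" "sum_mset Q = image_mset f (mset_set A2)"
    by (rule image_mset_mset_set_eq_plusE)
  have "finite A2" using A(1) add.prems(1) by simp
  moreover have "{#} \<notin># Q" using add.prems(3) by simp
  ultimately obtain P where P: "partition_on A2 P"
    "Q = image_mset (\<lambda>B. image_mset f (mset_set B)) (mset_set P)"
    using add.IH[OF _ A(4)] by blast
  have "A1 \<noteq> {}" using add.prems(3) A(3) by auto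
  have "finite P" using \<open>finite A2\<close> P(1) by (rule finite_elements)
  have "\<Union>P = A2" using P(1) by (simp add: partition_on_def)
  with \<open>A1 \<noteq> {}\<close> A(2) have "A1 \<notin> P" by blast
  have "A - A1 = A2" using A(1,2) by blast
  with P(1) A(1) \<open>\<Union>P = A2\<close> \<open>A1 \<noteq> {}\<close> have "partition_on A (insert A1 P)"
    by (subst partition_on_insert) (auto simp: disjnt_def A(2))
  with P(2) A(3) \<open>finite P\<close> \<open>A1 \<notin> P\<close> show ?case
    by (intro exI[of _ "insert A1 P"]) simp
qed

lemma HTvD_eq_TvD:
  assumes "arrangement A"
  shows "HTvD A q = TvD (dual_arr A q) q"
proof -
  have "finite A" using assms by (simp add: arrangement_def)
  have RD_part: "1 \<le> RD B q \<longleftrightarrow> q \<in> convex hull set_mset (dual_arr B q)"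
    if "partition_on A P" "B \<in> P" for P B
    using that one_le_RD_iff_in_convex_hull[OF arrangement_subset[OF assms]]
    by (auto simp: partition_on_def)
  have "(\<exists>P. partition_on A P \<and> card P = r \<and> (\<forall>B\<in>P. 1 \<le> RD B q)) \<longleftrightarrow>
        (\<exists>Q. sum_mset Q = dual_arr A q \<and> size Q = r \<and> (\<forall>B\<in>#Q. q \<in> convex hull set_mset B))"
    for r
  proof
    assume "\<exists>P. partition_on A P \<and> card P = r \<and> (\<forall>B\<in>P. 1 \<le> RD B q)"
    then obtain P where P: "partition_on A P" "card P = r" "\<forall>B\<in>P. 1 \<le> RD B q" by blast
    have "finite P" using \<open>finite A\<close> P(1) by (rule finite_elements)
    have "sum_mset (image_mset (\<lambda>B. dual_arr B q) (mset_set P)) = dual_arr A q"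
      using sum_mset_image_mset_mset_set_partition[OF \<open>finite A\<close> P(1)] by (simp add: dual_arr_def)
    with P RD_part \<open>finite P\<close>
    show "\<exists>Q. sum_mset Q = dual_arr A q \<and> size Q = r \<and> (\<forall>B\<in>#Q. q \<in> convex hull set_mset B)"
      by (intro exI[of _ "image_mset (\<lambda>B. dual_arr B q) (mset_set P)"]) auto
  next
    assume "\<exists>Q. sum_mset Q = dual_arr A q \<and> size Q = r \<and> (\<forall>B\<in>#Q. q \<in> convex hull set_mset B)"
    then obtain Q where Q: "sum_mset Q = dual_arr A q" "size Q = r"
      "\<forall>B\<in>#Q. q \<in> convex hull set_mset B" by blast
    have "{#} \<notin># Q" using Q(3) by fastforce
    then obtain P where P: "partition_on A P" "Q = image_mset (\<lambda>B. dual_arr B q) (mset_set P)"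
      using ex_partition_if_sum_mset_eq_image_mset_mset_set[OF \<open>finite A\<close>] Q(1)
      by (auto simp: dual_arr_def)
    have "finite P" using \<open>finite A\<close> P(1) by (rule finite_elements)
    with P Q(2,3) RD_part show "\<exists>P. partition_on A P \<and> card P = r \<and> (\<forall>B\<in>P. 1 \<le> RD B q)"
      by (intro exI[of _ P]) auto
  qed
  then show ?thesis by (simp add: HTvD_def TvD_def)
qed

lemma hyp_encloses_imp_pt_encloses:
  fixes A :: "'a::euclidean_space set set"
  assumes "arrangement A" "hyp_encloses A k q"
  shows "pt_encloses (dual_arr A q) k q"
proof -
  obtain F where F: "(\<Union>i\<le>DIM('a). F i) = A"
    "\<forall>i\<le>DIM('a). \<forall>j\<le>DIM('a). i \<noteq> j \<longrightarrow> F i \<inter> F j = {}" "\<forall>i\<le>DIM('a). card (F i) = k"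
    "\<forall>h. (\<forall>i\<le>DIM('a). h i \<in> F i) \<longrightarrow> 1 \<le> RD (h ` {..DIM('a)}) q"
    using assms(2) unfolding hyp_encloses_def by blast
  have "finite A" using assms(1) by (simp add: arrangement_def)
  then have fin: "finite (F i)" if "i \<le> DIM('a)" for i
    using F(1) that by (meson UN_upper atMost_iff finite_subset)
  show ?thesis
    unfolding pt_encloses_def
  proof (intro exI[of _ "\<lambda>i. dual_arr (F i) q"] conjI allI impI)
    show "(\<Sum>i\<le>DIM('a). dual_arr (F i) q) = dual_arr A q"
      using sum_image_mset_mset_set_disjoint_family[of "{..DIM('a)}" F] F(1,2) fin
      by (simp add: dual_arr_def)
    show "size (dual_arr (F i) q) = k" if "i \<le> DIM('a)" for i
      using F(3) that by (simp add: dual_arr_def)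
  next
    fix p :: "nat \<Rightarrow> 'a"
    assume "\<forall>i\<le>DIM('a). p i \<in># dual_arr (F i) q"
    then have "\<forall>i. \<exists>h. i \<le> DIM('a) \<longrightarrow> h \<in> F i \<and> p i = closest_point h q"
      using fin by (auto simp: dual_arr_def)
    then obtain h where h: "\<forall>i\<le>DIM('a). h i \<in> F i \<and> p i = closest_point (h i) q" by metis
    then have "h ` {..DIM('a)} \<subseteq> A" using F(1) by blast
    with h F(4) have "q \<in> convex hull ((\<lambda>i. closest_point (h i) q) ` {..DIM('a)})"
      using one_le_RD_image_iff[OF assms(1)] by blast
    moreover have "(\<lambda>i. closest_point (h i) q) ` {..DIM('a)} = p ` {..DIM('a)}" using h by force
    ultimately show "q \<in> convex hull (p ` {..DIM('a)})" by simp
  qed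
qed

lemma pt_encloses_imp_hyp_encloses:
  fixes A :: "'a::euclidean_space set set"
  assumes "arrangement A" "pt_encloses (dual_arr A q) k q"
  shows "hyp_encloses A k q"
proof -
  have "finite A" using assms(1) by (simp add: arrangement_def)
  obtain G where G: "(\<Sum>i\<le>DIM('a). G i) = dual_arr A q" "\<forall>i\<le>DIM('a). size (G i) = k"
    "\<forall>p. (\<forall>i\<le>DIM('a). p i \<in># G i) \<longrightarrow> q \<in> convex hull (p ` {..DIM('a)})"
    using assms(2) unfolding pt_encloses_def by blast
  obtain F where F: "(\<Union>i\<le>DIM('a). F i) = A"
    "\<forall>i\<le>DIM('a). \<forall>j\<le>DIM('a). i \<noteq> j \<longrightarrow> F i \<inter> F j = {}"
    "\<forall>i\<le>DIM('a). G i = dual_arr (F i) q"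
    using ex_disjoint_family_if_sum_eq_image_mset_mset_set[OF finite_atMost \<open>finite A\<close>
        G(1)[unfolded dual_arr_def]]
    by (auto simp: dual_arr_def)
  have fin: "finite (F i)" if "i \<le> DIM('a)" for i
    using F(1) that \<open>finite A\<close> by (meson UN_upper atMost_iff finite_subset)
  show ?thesis
    unfolding hyp_encloses_def
  proof (intro exI[of _ F] conjI allI impI)
    show "card (F i) = k" if "i \<le> DIM('a)" for i
      using G(2) F(3) that by (simp add: dual_arr_def)
  next
    fix h :: "nat \<Rightarrow> 'a set"
    assume h: "\<forall>i\<le>DIM('a). h i \<in> F i"
    then have "\<forall>i\<le>DIM('a). closest_point (h i) q \<in># G i"
      using F(3) fin by (simp add: dual_arr_def)
    then have "q \<in> convex hull ((\<lambda>i. closest_point (h i) q) ` {..DIM('a)})"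
      using G(3)[rule_format, of "\<lambda>i. closest_point (h i) q"] by simp
    moreover have "h ` {..DIM('a)} \<subseteq> A" using h F(1) by blast
    ultimately show "1 \<le> RD (h ` {..DIM('a)}) q"
      using one_le_RD_image_iff[OF assms(1)] by blast
  qed (use F in auto)
qed

lemma HED_eq_ED:
  assumes "arrangement A"
  shows "HED A q = ED (dual_arr A q) q"
proof -
  have "finite A" using assms by (simp add: arrangement_def)
  have "(\<exists>A'\<subseteq>A. hyp_encloses A' k q) \<longleftrightarrow> (\<exists>S'. S' \<subseteq># dual_arr A q \<and> pt_encloses S' k q)" for k
  proof
    assume "\<exists>A'\<subseteq>A. hyp_encloses A' k q"
    then obtain A' where "A' \<subseteq> A" "hyp_encloses A' k q" by blast
    moreover have "dual_arr A' q \<subseteq># dual_arr A q"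
      using \<open>A' \<subseteq> A\<close> \<open>finite A\<close> unfolding dual_arr_def
      by (intro image_mset_subseteq_mono subset_imp_msubset_mset_set)
    ultimately show "\<exists>S'. S' \<subseteq># dual_arr A q \<and> pt_encloses S' k q"
      using hyp_encloses_imp_pt_encloses[OF arrangement_subset[OF assms]] by blast
  next
    assume "\<exists>S'. S' \<subseteq># dual_arr A q \<and> pt_encloses S' k q"
    then obtain S' where "S' \<subseteq># dual_arr A q" "pt_encloses S' k q" by blast
    moreover obtain A' where "A' \<subseteq> A" "S' = dual_arr A' q"
      using \<open>finite A\<close> \<open>S' \<subseteq># dual_arr A q\<close> unfolding dual_arr_def
      by (rule subseteq_image_mset_mset_setE)
    ultimately show "\<exists>A'\<subseteq>A. hyp_encloses A' k q"
      using pt_encloses_imp_hyp_encloses[OF arrangement_subset[OF assms]] by blast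
  qed
  then show ?thesis by (simp add: HED_def ED_def)
qed

theorem corollary2p2:
  fixes A :: "'a::euclidean_space set set" and q :: 'a
  assumes "arrangement A" and "general_position A"
  shows "RD A q = TD (dual_arr A q) q \<and>
         HTvD A q = TvD (dual_arr A q) q \<and>
         HED A q = ED (dual_arr A q) q"
  using RD_eq_TD[OF assms(1)] HTvD_eq_TvD[OF assms(1)] HED_eq_ED[OF assms(1)] by blast

end
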